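(* Work in dimension $d=2$. Let $\tau=(V,E)$ be a rooted tree and $\sigma$ a bijection of $V$ such that $\sigma.\tau$ is a rooted tree and $F(\tau)=F(\sigma.\tau)$ (as multilinear maps $\mathcal{C}_2^{V}\to\mathcal{C}_2$). Then $\sigma(C_v)=C_v$ for every $v\in V$; consequently $E_\sigma=E$. In particular $F(\sigma.\tau)=F(\tau)$ if and only if $\sigma.\tau=\tau$.
   Context: A rooted tree on a finite vertex set $V\subset\mathbb{N}$ is a set $E$ of ordered pairs of elements of $V$ (an edge $(v,w)$ means $w$ is a child of $v$) such that exactly one vertex $r$ (the root) has no parent, every other vertex has exactly one parent, and every vertex is connected to the root by following parents. $C_v=\{w:(v,w)\in E\}$; $\tau_v$ is the subtree of $v$ and its descendants. For a bijection $\sigma$ of $V$, set $E_\sigma=\{(v,\sigma(w)):(v,w)\in E\}$ and $\sigma.\tau=(V,E_\sigma)$ (each vertex other than $\sigma(r)$ has exactly one parent; it is a rooted tree when it is weakly connected). Note this is not the usual relabelling action. Let $\mathcal{C}_d=C^\infty(\mathbb{R}^d,\mathbb{R}^d)$, $g_j$ the $j$-th coordinate, $\partial_j=\partial/\partial x_j$. For $\tau$ with root $r$ whose children are $v_1,\dots,v_k$, define recursively $F(\tau)((f^i)_{i\in V})=\sum_{j_1,\dots,j_k=1}^d F(\tau_{v_1})((f^i)_{i\in V(\tau_{v_1})})_{j_1}\cdots F(\tau_{v_k})((f^i)_{i\in V(\tau_{v_k})})_{j_k}\,\partial_{j_1}\cdots\partial_{j_k}f^r$ (for a single vertex $F(\tau)=f^r$).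 *)

theory Defs
  imports "HOL-Analysis.Analysis"
begin

definition parents :: "(nat \<times> nat) set \<Rightarrow> nat \<Rightarrow> nat set" where
  "parents E w = {v. (v, w) \<in> E}"

definition children :: "(nat \<times> nat) set \<Rightarrow> nat \<Rightarrow> nat set" where
  "children E v = {w. (v, w) \<in> E}"

definition rooted_tree :: "nat set \<Rightarrow> (nat \<times> nat) set \<Rightarrow> bool" where
  "rooted_tree V E \<longleftrightarrow> finite V \<and> E \<subseteq> V \<times> V \<and>
     (\<exists>!r. r \<in> V \<and> parents E r = {}) \<and>
     (\<forall>r\<in>V. parents E r = {} \<longrightarrow>
        (\<forall>w\<in>V - {r}. card (parents E w) = 1 \<and> finite (parents E w)) \<and>
        (\<forall>w\<in>V. (r, w) \<in> E\<^sup>*))"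

definition tree_root :: "nat set \<Rightarrow> (nat \<times> nat) set \<Rightarrow> nat" where
  "tree_root V E = (THE r. r \<in> V \<and> parents E r = {})"

definition act_edges :: "(nat \<Rightarrow> nat) \<Rightarrow> (nat \<times> nat) set \<Rightarrow> (nat \<times> nat) set" where
  "act_edges \<sigma> E = (\<lambda>(v, w). (v, \<sigma> w)) ` E"

type_synonym field2 = "real^2 \<Rightarrow> real^2"

definition pdiff :: "2 \<Rightarrow> field2 \<Rightarrow> field2" where
  "pdiff j g = (\<lambda>x. frechet_derivative g (at x) (axis j 1))"

definition pdiffs :: "2 list \<Rightarrow> field2 \<Rightarrow> field2" where
  "pdiffs js g = foldr pdiff js g"

text \<open>C-infinity: every iterated partial derivative exists and is (Frechet) differentiable
  everywhere; this is equivalent to the usual notion of smoothness.\<close>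
definition smooth2 :: "field2 \<Rightarrow> bool" where
  "smooth2 g \<longleftrightarrow> (\<forall>js. \<forall>x. pdiffs js g differentiable (at x))"

text \<open>F restricted to the subtree at v, computed with a fuel parameter (fuel at least
  the height of the subtree suffices; card V is always enough).\<close>
fun Fsub :: "nat \<Rightarrow> (nat \<times> nat) set \<Rightarrow> (nat \<Rightarrow> field2) \<Rightarrow> nat \<Rightarrow> field2" where
  "Fsub 0 E f v = f v"
| "Fsub (Suc n) E f v =
     (\<lambda>x. \<Sum>j \<in> PiE (children E v) (\<lambda>_. UNIV).
        (\<Prod>w\<in>children E v. Fsub n E f w x $ j w) *\<^sub>R
        pdiffs (map j (sorted_list_of_set (children E v))) (f v) x)"

definition F_tree :: "nat set \<Rightarrow> (nat \<times> nat) set \<Rightarrow> (nat \<Rightarrow> field2) \<Rightarrow> field2" where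
  "F_tree V E f = Fsub (card V) E f (tree_root V E)"

definition F_equal :: "nat set \<Rightarrow> (nat \<times> nat) set \<Rightarrow> (nat \<times> nat) set \<Rightarrow> bool" where
  "F_equal V E E' \<longleftrightarrow> (\<forall>f. (\<forall>i\<in>V. smooth2 (f i)) \<longrightarrow> F_tree V E f = F_tree V E' f)"

end

theory Submission
  imports Defs
begin

(* Colour each vertex u by a coordinate direction c(u) and feed it the field
   x1^a(u) x2^b(u) e_c(u), where a(u) and b(u) count the children of u in tau of colour 1
   and 2. In F(tau) only the summand in which every child contributes along its own colour
   survives, and it differentiates each monomial down to a nonzero constant, so F(tau) does
   not vanish. If another rooted tree tau' on V has an edge (v, w) missing from tau, colour
   the tau-children of v by 1 and all other vertices by 2: in F(tau') the vertex v receives a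
   derivative in x2 of a field independent of x2, so F(tau') vanishes identically. Hence
   F(tau) = F(tau') forces tau' to be contained in tau, and by symmetry tau' = tau.
   The theorem is the case tau' = sigma.tau, whose children are the sigma-images of those of
   tau. *)

definition monomial_field :: "real \<Rightarrow> nat \<Rightarrow> nat \<Rightarrow> real^2 \<Rightarrow> field2" where
  "monomial_field m a b e = (\<lambda>x. (m * x$1^a * x$2^b) *\<^sub>R e)"

lemma monomial_field_has_derivative:
  "(monomial_field m a b e has_derivative
     (\<lambda>h. (m * (real a * x$1^(a-1) * h$1) * x$2^b + m * x$1^a * (real b * x$2^(b-1) * h$2)) *\<^sub>R e))
   (at x)"
  unfolding monomial_field_def
  by (auto intro!: derivative_eq_intros bounded_linear.has_derivative[OF bounded_linear_vec_nth]
      simp: algebra_simps)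

lemma pdiff_monomial_field_1:
  "pdiff 1 (monomial_field m a b e) = monomial_field (m * real a) (a - 1) b e"
  unfolding pdiff_def frechet_derivative_at[OF monomial_field_has_derivative, symmetric]
  by (simp add: monomial_field_def axis_def algebra_simps)

lemma pdiff_monomial_field_2:
  "pdiff 2 (monomial_field m a b e) = monomial_field (m * real b) a (b - 1) e"
  unfolding pdiff_def frechet_derivative_at[OF monomial_field_has_derivative, symmetric]
  by (simp add: monomial_field_def axis_def algebra_simps)

(* For i > a the factor real (a - i) is a truncated junk value, but then the factor i = a
   already vanishes. *)
definition falling_factorial :: "nat \<Rightarrow> nat \<Rightarrow> real" where
  "falling_factorial a n = (\<Prod>i<n. real (a - i))"

lemma falling_factorial_Suc: "falling_factorial a (Suc n) = falling_factorial a n * real (a - n)"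
  by (simp add: falling_factorial_def)

lemma falling_factorial_eq_0_iff: "falling_factorial a n = 0 \<longleftrightarrow> a < n"
  by (auto simp: falling_factorial_def)

lemma pdiffs_monomial_field:
  "pdiffs js (monomial_field m a b e) =
     monomial_field (m * falling_factorial a (count_list js 1) * falling_factorial b (count_list js 2))
       (a - count_list js 1) (b - count_list js 2) e"
proof (induction js)
  case Nil
  then show ?case by (simp add: pdiffs_def falling_factorial_def)
next
  case (Cons j js)
  then have "pdiffs (j # js) (monomial_field m a b e) =
      pdiff j (monomial_field (m * falling_factorial a (count_list js 1) * falling_factorial b (count_list js 2))
        (a - count_list js 1) (b - count_list js 2) e)"
    by (simp add: pdiffs_def)
  then show ?case
    using exhaust_2[of j]
    by (auto simp: pdiff_monomial_field_1 pdiff_monomial_field_2 falling_factorial_Suc algebra_simps)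
qed

lemma smooth2_monomial_field: "smooth2 (monomial_field m a b e)"
  unfolding smooth2_def pdiffs_monomial_field differentiable_def
  using monomial_field_has_derivative by blast

lemma count_list_map_sorted_list_of_set:
  assumes "finite C"
  shows "count_list (map c (sorted_list_of_set C)) i = card {w\<in>C. c w = i}"
proof -
  have "count_list (map c (sorted_list_of_set C)) i = length (filter (\<lambda>w. c w = i) (sorted_list_of_set C))"
    by (simp add: count_list_eq_length_filter filter_map comp_def eq_commute)
  also have "\<dots> = card {w\<in>C. c w = i}"
    using assms by (simp add: distinct_length_filter Collect_conj_eq Int_commute)
  finally show ?thesis .
qed

definition colour_field :: "(nat \<times> nat) set \<Rightarrow> (nat \<Rightarrow> 2) \<Rightarrow> nat \<Rightarrow> field2" where
  "colour_field E c v = monomial_field 1 (card {w \<in> children E v. c w = 1})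
     (card {w \<in> children E v. c w = 2}) (axis (c v) 1)"

lemma smooth2_colour_field: "smooth2 (colour_field E c v)"
  by (simp add: colour_field_def smooth2_monomial_field)

lemma pdiffs_colour_field_component:
  "i \<noteq> c v \<Longrightarrow> pdiffs js (colour_field E c v) x $ i = 0"
  unfolding colour_field_def pdiffs_monomial_field by (simp add: monomial_field_def axis_def)

lemma Fsub_component_eq_0:
  assumes "\<And>js y. pdiffs js (f v) y $ i = 0"
  shows "Fsub n E f v x $ i = 0"
proof (cases n)
  case 0
  then show ?thesis using assms[of "[]"] by (simp add: pdiffs_def)
next
  case (Suc k)
  then show ?thesis by (simp add: assms)
qed

lemma Fsub_Suc_own_colours:
  assumes fin: "finite (children E v)"
    and other: "\<And>w y i. w \<in> children E v \<Longrightarrow> i \<noteq> c w \<Longrightarrow> Fsub n E f w y $ i = 0"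
  shows "Fsub (Suc n) E f v x =
    (\<Prod>w\<in>children E v. Fsub n E f w x $ c w) *\<^sub>R
      pdiffs (map c (sorted_list_of_set (children E v))) (f v) x"
proof -
  define C where "C = children E v"
  let ?term = "\<lambda>j. (\<Prod>w\<in>C. Fsub n E f w x $ j w) *\<^sub>R pdiffs (map j (sorted_list_of_set C)) (f v) x"
  have zero: "?term j = 0" if j: "j \<in> PiE C (\<lambda>_. UNIV)" "j \<noteq> restrict c C" for j
  proof -
    obtain w where "w \<in> C" "j w \<noteq> c w"
      using j by (force simp: PiE_def extensional_def)
    then have "(\<Prod>w\<in>C. Fsub n E f w x $ j w) = 0"
      using fin other by (intro prod_zero) (auto simp: C_def)
    then show ?thesis by simp
  qed
  have "Fsub (Suc n) E f v x = (\<Sum>j \<in> PiE C (\<lambda>_. UNIV). ?term j)"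
    by (simp add: C_def)
  also have "\<dots> = (\<Sum>j \<in> {restrict c C}. ?term j)"
    using fin zero by (intro sum.mono_neutral_right) (auto simp: C_def finite_PiE)
  also have "\<dots> = ?term (restrict c C)"
    by simp
  also have "\<dots> = (\<Prod>w\<in>C. Fsub n E f w x $ c w) *\<^sub>R pdiffs (map c (sorted_list_of_set C)) (f v) x"
  proof -
    have "map (restrict c C) (sorted_list_of_set C) = map c (sorted_list_of_set C)"
      using fin by (intro map_cong) (auto simp: C_def)
    moreover have "(\<Prod>w\<in>C. Fsub n E f w x $ restrict c C w) = (\<Prod>w\<in>C. Fsub n E f w x $ c w)"
      by simp
    ultimately show ?thesis by (simp only:)
  qed
  finally show ?thesis by (simp add: C_def)
qed

lemma Fsub_colour_field_Suc:
  assumes "finite (children E' v)"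
  shows "Fsub (Suc n) E' (colour_field E c) v x =
    (\<Prod>w\<in>children E' v. Fsub n E' (colour_field E c) w x $ c w) *\<^sub>R
      pdiffs (map c (sorted_list_of_set (children E' v))) (colour_field E c v) x"
  using assms by (intro Fsub_Suc_own_colours Fsub_component_eq_0 pdiffs_colour_field_component)

(* Evaluation at (1, 1) also makes the undifferentiated monomials met at fuel 0 nonzero. *)
lemma Fsub_colour_field_nonzero:
  assumes fin: "\<And>u. finite (children E u)"
  shows "\<exists>s. s \<noteq> 0 \<and> Fsub n E (colour_field E c) v (vec 1) = s *\<^sub>R axis (c v) 1"
proof (induction n arbitrary: v)
  case 0
  show ?case by (auto simp: colour_field_def monomial_field_def)
next
  case (Suc n)
  then obtain s where s: "\<And>w. s w \<noteq> 0 \<and> Fsub n E (colour_field E c) w (vec 1) = s w *\<^sub>R axis (c w) 1"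
    by metis
  define C where "C = children E v"
  define a where "a = card {w \<in> C. c w = 1}"
  define b where "b = card {w \<in> C. c w = 2}"
  have finC: "finite C"
    using fin by (simp add: C_def)
  have "pdiffs (map c (sorted_list_of_set C)) (colour_field E c v) (vec 1) =
      (falling_factorial a a * falling_factorial b b) *\<^sub>R axis (c v) 1"
    unfolding colour_field_def pdiffs_monomial_field count_list_map_sorted_list_of_set[OF finC]
    by (simp add: monomial_field_def C_def a_def b_def)
  then have "Fsub (Suc n) E (colour_field E c) v (vec 1) =
      ((\<Prod>w\<in>C. s w) * (falling_factorial a a * falling_factorial b b)) *\<^sub>R axis (c v) 1"
    unfolding Fsub_colour_field_Suc[OF fin] C_def[symmetric] using s by simp
  moreover have "(\<Prod>w\<in>C. s w) * (falling_factorial a a * falling_factorial b b) \<noteq> 0"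
    using s fin by (simp add: C_def falling_factorial_eq_0_iff)
  ultimately show ?case by blast
qed

lemma Fsub_colour_field_eq_0:
  assumes fin: "finite (children E' v)"
    and more: "card {w \<in> children E v. c w = 2} < card {w \<in> children E' v. c w = 2}"
  shows "Fsub (Suc n) E' (colour_field E c) v x = 0"
proof -
  have "pdiffs (map c (sorted_list_of_set (children E' v))) (colour_field E c v) x = 0"
    unfolding colour_field_def pdiffs_monomial_field count_list_map_sorted_list_of_set[OF fin]
    using more by (simp add: monomial_field_def falling_factorial_eq_0_iff)
  then show ?thesis
    unfolding Fsub_colour_field_Suc[OF fin] by simp
qed

lemma Fsub_ancestor_eq_0:
  assumes fin: "\<And>u. finite (children E u)"
    and zero: "\<And>m. Fsub (Suc m) E f v x = 0"
  shows "(u, v) \<in> E ^^ k \<Longrightarrow> k < n \<Longrightarrow> Fsub n E f u x = 0"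
proof (induction k arbitrary: u n)
  case 0
  then show ?case using zero[of "n - 1"] by simp
next
  case (Suc k)
  obtain y where y: "(u, y) \<in> E" "(y, v) \<in> E ^^ k"
    using relpow_Suc_D2[OF Suc.prems(1)] by blast
  obtain m where n: "n = Suc m" and "k < m"
    using Suc.prems(2) by (cases n) auto
  then have "Fsub m E f y x = 0"
    using Suc.IH[OF y(2)] by blast
  then have "(\<Prod>w\<in>children E u. Fsub m E f w x $ j w) = 0" for j
    using fin y(1) by (intro prod_zero) (auto simp: children_def)
  then show ?case by (simp add: n)
qed

lemma rooted_tree_finite_children: "rooted_tree V E \<Longrightarrow> finite (children E v)"
  unfolding rooted_tree_def children_def by (auto intro: finite_subset)

lemma rooted_tree_root:
  assumes "rooted_tree V E"
  shows "tree_root V E \<in> V" "parents E (tree_root V E) = {}"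
  using assms theI'[of "\<lambda>r. r \<in> V \<and> parents E r = {}"]
  unfolding rooted_tree_def tree_root_def by auto

lemma rooted_tree_card_edges_less:
  assumes t: "rooted_tree V E"
  shows "card E < card V"
proof -
  define r where "r = tree_root V E"
  have finV: "finite V" and sub: "E \<subseteq> V \<times> V"
    using t by (auto simp: rooted_tree_def)
  have r: "r \<in> V" "parents E r = {}"
    using rooted_tree_root[OF t] by (auto simp: r_def)
  have one_parent: "card (parents E w) = 1" if "w \<in> V - {r}" for w
    using t r that unfolding rooted_tree_def by blast
  have "inj_on snd E"
  proof (rule inj_onI)
    fix p q assume pq: "p \<in> E" "q \<in> E" "snd p = snd q"
    then have "fst p \<in> parents E (snd p)" "fst q \<in> parents E (snd p)" "snd p \<in> V - {r}"
      using sub r by (auto simp: parents_def)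
    then show "p = q"
      using one_parent pq(3) by (metis card_1_singletonE prod_eq_iff singletonD)
  qed
  moreover have "snd ` E \<subseteq> V - {r}"
    using sub r by (force simp: parents_def)
  ultimately have "card E \<le> card (V - {r})"
    using finV by (metis card_image card_mono finite_Diff)
  also have "\<dots> < card V"
    using finV r by (intro card_Diff1_less)
  finally show ?thesis .
qed

lemma rooted_tree_reaches_in_less_card:
  assumes t: "rooted_tree V E" and v: "v \<in> V"
  shows "\<exists>k < card V. (tree_root V E, v) \<in> E ^^ k"
proof -
  have "finite E"
    using t unfolding rooted_tree_def by (meson finite_SigmaI finite_subset)
  moreover have "(tree_root V E, v) \<in> E\<^sup>*"
    using t v rooted_tree_root[OF t] unfolding rooted_tree_def by blast
  ultimately obtain k where "k \<le> card E" "(tree_root V E, v) \<in> E ^^ k"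
    using rtrancl_finite_eq_relpow by blast
  then show ?thesis
    using rooted_tree_card_edges_less[OF t] by (intro exI[of _ k]) auto
qed

lemma F_tree_colour_field_neq_0:
  assumes "rooted_tree V E"
  shows "F_tree V E (colour_field E c) (vec 1) \<noteq> 0"
proof -
  obtain s where "s \<noteq> 0" "F_tree V E (colour_field E c) (vec 1) = s *\<^sub>R axis (c (tree_root V E)) 1"
    using Fsub_colour_field_nonzero[OF rooted_tree_finite_children[OF assms]]
    unfolding F_tree_def by blast
  then show ?thesis by simp
qed

lemma F_tree_colour_field_eq_0:
  assumes E': "rooted_tree V E'" and v: "v \<in> V"
    and more: "card {w \<in> children E v. c w = 2} < card {w \<in> children E' v. c w = 2}"
  shows "F_tree V E' (colour_field E c) x = 0"
proof -
  have fin: "finite (children E' u)" for u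
    using E' by (rule rooted_tree_finite_children)
  obtain k where k: "k < card V" "(tree_root V E', v) \<in> E' ^^ k"
    using rooted_tree_reaches_in_less_card[OF E' v] by blast
  have "Fsub (Suc m) E' (colour_field E c) v x = 0" for m
    using fin more by (rule Fsub_colour_field_eq_0)
  then show ?thesis
    unfolding F_tree_def by (rule Fsub_ancestor_eq_0[OF fin _ k(2,1)])
qed

lemma F_equal_imp_edges_subset:
  assumes E: "rooted_tree V E" and E': "rooted_tree V E'" and eq: "F_equal V E E'"
  shows "E' \<subseteq> E"
proof (rule subrelI)
  fix v w assume vw: "(v, w) \<in> E'"
  show "(v, w) \<in> E"
  proof (rule ccontr)
    assume "(v, w) \<notin> E"
    define c where "c u = (if u \<in> children E v then 1 else 2::2)" for u
    have v: "v \<in> V"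
      using E' vw by (auto simp: rooted_tree_def)
    have "card {u \<in> children E v. c u = 2} < card {u \<in> children E' v. c u = 2}"
    proof -
      have "{u \<in> children E v. c u = 2} = {}"
        by (simp add: c_def)
      moreover have "w \<in> {u \<in> children E' v. c u = 2}"
        using vw \<open>(v, w) \<notin> E\<close> by (simp add: c_def children_def)
      moreover have "finite {u \<in> children E' v. c u = 2}"
        using rooted_tree_finite_children[OF E'] by simp
      ultimately show ?thesis
        using card_gt_0_iff by (metis card.empty empty_iff)
    qed
    then have "F_tree V E' (colour_field E c) (vec 1) = 0"
      by (rule F_tree_colour_field_eq_0[OF E' v])
    moreover have "F_tree V E (colour_field E c) (vec 1) \<noteq> 0"
      using E by (rule F_tree_colour_field_neq_0)
    moreover have "F_tree V E (colour_field E c) = F_tree V E' (colour_field E c)"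
      using eq by (simp add: F_equal_def smooth2_colour_field)
    ultimately show False by simp
  qed
qed

lemma F_equal_imp_eq:
  assumes "rooted_tree V E" and "rooted_tree V E'" and "F_equal V E E'"
  shows "E' = E"
proof -
  have "F_equal V E' E"
    using assms(3) by (simp add: F_equal_def)
  then show ?thesis
    using assms F_equal_imp_edges_subset by blast
qed

lemma children_act_edges: "children (act_edges \<sigma> E) v = \<sigma> ` children E v"
  by (force simp: children_def act_edges_def)

theorem proposition3p4:
  fixes V :: "nat set" and E :: "(nat \<times> nat) set" and \<sigma> :: "nat \<Rightarrow> nat"
  assumes "rooted_tree V E"
    and "bij_betw \<sigma> V V"
    and "rooted_tree V (act_edges \<sigma> E)"
  shows "(F_equal V E (act_edges \<sigma> E) \<longrightarrow>
            (\<forall>v\<in>V. \<sigma> ` children E v = children E v) \<and> act_edges \<sigma> E = E)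
         \<and> (F_equal V E (act_edges \<sigma> E) \<longleftrightarrow> act_edges \<sigma> E = E)"
proof -
  have "F_equal V E (act_edges \<sigma> E) \<longleftrightarrow> act_edges \<sigma> E = E"
    using F_equal_imp_eq[OF assms(1,3)] by (auto simp: F_equal_def)
  moreover have "\<sigma> ` children E v = children E v" if "act_edges \<sigma> E = E" for v
    using that children_act_edges by metis
  ultimately show ?thesis by blast
qed

end
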